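(* Assume $\chi(0)<0$ and conditions (C) and (N) hold. Then there exists $\zeta_1\in(0,\zeta_2)$ such that: (1) $G:[0,\infty)\to[0,\infty)$ is continuous, $G(s)>0$ for $s>0$, and the right derivative $G'(0+)$ exists (possibly $+\infty$) and $G'(0+)>1$; (2) $G([\zeta_1,\zeta_2])\subseteq[\zeta_1,\zeta_2]$ and $G([0,\infty))\subseteq[0,\zeta_2]$; (3) $\min_{s\in[\zeta_1,\zeta_2]}G(s)=G(\zeta_1)$, and $G(s)>s$ for all $s\in(0,\zeta_1]$.
   Context: Let $(X,\mu)$ be a finite measure space. Let $K:\mathbb{R}\times X\to[0,\infty)$ be measurable and integrable on $\mathbb{R}\times X$, with $\int_{\mathbb{R}}K(s,\tau)\,ds>0$ for every $\tau$. Let $g:[0,\infty)\times X\to[0,\infty)$ be measurable, with $g(0,\tau)=0$, $g(\cdot,\tau)$ continuous for each $\tau$, and the derivative $g'(0,\tau)$ at $0$ existing and positive. $\chi(z)=1-\int_X\int_{\mathbb{R}}K(s,\tau)g'(0,\tau)e^{-sz}\,ds\,d\mu(\tau)$. Condition (C): for each $\delta>0$ there is a measurable $C_\delta\geq0$ on $X$ with $g(u,\tau)\leq C_\delta(\tau)u$ for $u\in[0,\delta]$ and $\int_X C_\delta(\tau)\left(\int_{\mathbb{R}}K(s,\tau)ds\right)d\mu(\tau)<+\infty$. Condition (N): (N1) there is $\tau_0\in X$ with $\mu(\{\tau_0\})=1$ such that $g(v,\tau)$ is increasing in $v$ for each $\tau\neq\tau_0$ and $g(v,\tau_0)>0$ for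 $v>0$; $\tilde g(v)=\int_{X\setminus\{\tau_0\}}g(v,\tau)\left(\int_{\mathbb{R}}K(s,\tau)ds\right)d\mu(\tau)$. (N2) there is $\zeta_2>0$ such that $\Theta(v)=v-\tilde g(v)$ is strictly increasing on $[0,\zeta_2]$ and $\Theta(\zeta_2)>C\max_{v\geq0}g(v,\tau_0)$, $C=\int_{\mathbb{R}}K(s,\tau_0)ds$. Define $G(v)=\Theta^{-1}(Cg(v,\tau_0))$, $v\geq0$, with $\Theta^{-1}$ the inverse of $\Theta|_{[0,\zeta_2]}$. *)

theory Defs
  imports "HOL-Analysis.Analysis"
begin

definition chi :: "'a measure \<Rightarrow> (real \<Rightarrow> 'a \<Rightarrow> real) \<Rightarrow> ('a \<Rightarrow> real) \<Rightarrow> real \<Rightarrow> real" where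
  "chi M K g' z = 1 - (\<integral>\<tau>. (\<integral>s. K s \<tau> * g' \<tau> * exp (- s * z) \<partial>lborel) \<partial>M)"

definition gtilde :: "'a measure \<Rightarrow> (real \<Rightarrow> 'a \<Rightarrow> real) \<Rightarrow> (real \<Rightarrow> 'a \<Rightarrow> real) \<Rightarrow> 'a \<Rightarrow> real \<Rightarrow> real" where
  "gtilde M K g \<tau>0 v = set_lebesgue_integral M (space M - {\<tau>0}) (\<lambda>\<tau>. g v \<tau> * (\<integral>s. K s \<tau> \<partial>lborel))"

definition Theta :: "'a measure \<Rightarrow> (real \<Rightarrow> 'a \<Rightarrow> real) \<Rightarrow> (real \<Rightarrow> 'a \<Rightarrow> real) \<Rightarrow> 'a \<Rightarrow> real \<Rightarrow> real" where
  "Theta M K g \<tau>0 v = v - gtilde M K g \<tau>0 v"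

definition Gfun :: "'a measure \<Rightarrow> (real \<Rightarrow> 'a \<Rightarrow> real) \<Rightarrow> (real \<Rightarrow> 'a \<Rightarrow> real) \<Rightarrow> 'a \<Rightarrow> real \<Rightarrow> real \<Rightarrow> real" where
  "Gfun M K g \<tau>0 \<zeta>2 v = the_inv_into {0..\<zeta>2} (Theta M K g \<tau>0) ((\<integral>s. K s \<tau>0 \<partial>lborel) * g v \<tau>0)"

end

theory Submission
  imports Defs
begin

text \<open>
  On \<open>[0, \<zeta>2]\<close> the map \<open>\<Theta> v = v - gtilde v\<close> is strictly increasing and, since \<open>gtilde\<close>
  is monotone, \<open>1\<close>-Lipschitz; hence its inverse is continuous, and \<open>G\<close> (that inverse applied
  to \<open>C g(s, \<tau>0)\<close>) is continuous with values in \<open>[0, \<zeta>2)\<close>. Dominated convergence, justified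
  by condition (C), gives \<open>\<Theta>(v)/v \<rightarrow> 1 - I\<close>, where \<open>I\<close> is the contribution of
  \<open>X - {\<tau>0}\<close> to \<open>\<integral> g'(0,\<tau>) \<integral>K(s,\<tau>) ds d\<mu>(\<tau>)\<close>; and \<open>\<chi>(0) < 0\<close> says exactly
  \<open>C g'(0,\<tau>0) > 1 - I\<close>. As \<open>G(s)/s = (C g(s,\<tau>0)/s) / (\<Theta>(G s)/G s)\<close>, the right derivative
  of \<open>G\<close> at \<open>0\<close> is \<open>C g'(0,\<tau>0)/(1 - I) > 1\<close> (or \<open>+\<infinity>\<close>), so \<open>G(s) > s\<close> near \<open>0\<close>.
  Taking \<open>\<zeta>1\<close> as the last point of a short interval \<open>[0, t0]\<close> where \<open>G\<close> does not exceed its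
  minimum over \<open>[t0, \<zeta>2]\<close> makes \<open>G(\<zeta>1)\<close> the minimum of \<open>G\<close> on \<open>[\<zeta>1, \<zeta>2]\<close>.
\<close>

lemma continuous_on_if_nonexpansive_mono:
  fixes f :: "real \<Rightarrow> real"
  assumes "\<And>x y. x \<in> S \<Longrightarrow> y \<in> S \<Longrightarrow> x \<le> y \<Longrightarrow> 0 \<le> f y - f x \<and> f y - f x \<le> y - x"
  shows "continuous_on S f"
proof (rule lipschitz_on_continuous_on)
  show "1-lipschitz_on S f"
  proof (rule lipschitz_onI)
    fix x y assume "x \<in> S" "y \<in> S"
    then show "dist (f x) (f y) \<le> 1 * dist x y"
      using assms[of x y] assms[of y x] by (cases "x \<le> y") (auto simp: dist_real_def)
  qed simp
qed

lemma strict_mono_on_Icc_inverse: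
  fixes f :: "real \<Rightarrow> real"
  assumes mono: "strict_mono_on {a..b} f" and cont: "continuous_on {a..b} f" and "a \<le> b"
  shows strict_mono_on_Icc_image: "f ` {a..b} = {f a..f b}"
    and continuous_on_the_inv_into_Icc: "continuous_on {f a..f b} (the_inv_into {a..b} f)"
proof -
  show img: "f ` {a..b} = {f a..f b}"
  proof
    show "f ` {a..b} \<subseteq> {f a..f b}"
      using strict_mono_on_leD[OF mono] \<open>a \<le> b\<close> by fastforce
    show "{f a..f b} \<subseteq> f ` {a..b}"
      using IVT'[of f a _ b] cont \<open>a \<le> b\<close> by (fastforce simp: image_iff)
  qed
  have "the_inv_into {a..b} f (f x) = x" if "x \<in> {a..b}" for x
    using the_inv_into_f_f[OF strict_mono_on_imp_inj_on[OF mono] that] .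
  then show "continuous_on {f a..f b} (the_inv_into {a..b} f)"
    using continuous_on_inv[OF cont compact_Icc] img by simp
qed

lemma exists_self_map_interval:
  fixes G :: "real \<Rightarrow> real"
  assumes cont: "continuous_on {0..} G" and G0: "G 0 = 0"
    and pos: "\<And>s. 0 < s \<Longrightarrow> 0 < G s" and below: "\<And>s. 0 \<le> s \<Longrightarrow> G s < z"
    and expanding: "\<forall>\<^sub>F s in at_right 0. s < G s"
  shows "\<exists>\<zeta>1. 0 < \<zeta>1 \<and> \<zeta>1 < z \<and> G ` {\<zeta>1..z} \<subseteq> {\<zeta>1..z}
    \<and> (\<forall>s\<in>{\<zeta>1..z}. G \<zeta>1 \<le> G s) \<and> (\<forall>s\<in>{0<..\<zeta>1}. s < G s)"
proof -
  obtain \<epsilon> where \<epsilon>: "0 < \<epsilon>" "\<And>s. 0 < s \<Longrightarrow> s < \<epsilon> \<Longrightarrow> s < G s"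
    using expanding unfolding eventually_at_right_field by auto
  have "0 < z" using below[of 0] G0 by simp
  define t0 where "t0 = min (\<epsilon>/2) (z/2)"
  have t0: "0 < t0" "t0 < \<epsilon>" "t0 < z" using \<open>0 < \<epsilon>\<close> \<open>0 < z\<close> unfolding t0_def by auto
  have cont_Icc: "continuous_on {a..b} G" if "0 \<le> a" for a b
    using continuous_on_subset[OF cont] that by auto
  obtain x0 where x0: "x0 \<in> {t0..z}" "\<And>y. y \<in> {t0..z} \<Longrightarrow> G x0 \<le> G y"
    using continuous_attains_inf[OF compact_Icc _ cont_Icc, of t0 z] t0 by auto
  define \<mu> where "\<mu> = G x0"
  have "0 < \<mu>" unfolding \<mu>_def using pos x0 t0 by auto
  define S where "S = {0..t0} \<inter> G -` {..\<mu>}"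
  have "closed S" unfolding S_def
    by (rule continuous_closed_preimage) (use cont_Icc in auto)
  have "bdd_above S" unfolding S_def by (rule bdd_aboveI[of _ t0]) auto
  define \<zeta>1 where "\<zeta>1 = Sup S"
  have "0 \<in> S" using G0 \<open>0 < \<mu>\<close> t0 unfolding S_def by auto
  then have "\<zeta>1 \<in> S"
    unfolding \<zeta>1_def using closed_contains_Sup[OF _ \<open>bdd_above S\<close> \<open>closed S\<close>] by auto
  then have \<zeta>1: "\<zeta>1 \<le> t0" "G \<zeta>1 \<le> \<mu>" unfolding S_def by auto
  have upper: "y \<le> \<zeta>1" if "y \<in> S" for y
    unfolding \<zeta>1_def using cSup_upper[OF that \<open>bdd_above S\<close>] .
  have "\<mu> \<le> G t0" using x0 t0 unfolding \<mu>_def by auto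
  then obtain x1 where "0 \<le> x1" "x1 \<le> t0" "G x1 = \<mu>"
    using IVT'[of G 0 \<mu> t0] G0 \<open>0 < \<mu>\<close> t0 cont_Icc[of 0 t0] by auto
  moreover from this have "x1 \<le> \<zeta>1" using upper unfolding S_def by auto
  ultimately have "0 < \<zeta>1" using G0 \<open>0 < \<mu>\<close> by (cases "x1 = 0") auto
  have min: "G \<zeta>1 \<le> G s" if "s \<in> {\<zeta>1..z}" for s
  proof (cases "s \<le> t0")
    case True
    then have "s \<in> S \<or> \<mu> < G s" using that \<open>0 < \<zeta>1\<close> unfolding S_def by auto
    then show ?thesis using upper that \<zeta>1 by force
  next
    case False
    then have "G x0 \<le> G s" using x0(2) that by auto
    then show ?thesis using \<zeta>1 unfolding \<mu>_def by linarith
  qed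
  have "\<zeta>1 < G \<zeta>1" using \<epsilon>(2) \<open>0 < \<zeta>1\<close> \<zeta>1 t0 by simp
  then have "G ` {\<zeta>1..z} \<subseteq> {\<zeta>1..z}"
    using min below \<open>0 < \<zeta>1\<close> by (fastforce simp: less_imp_le)
  moreover have "\<forall>s\<in>{0<..\<zeta>1}. s < G s" using \<epsilon>(2) \<zeta>1 t0 by auto
  ultimately show ?thesis using \<open>0 < \<zeta>1\<close> \<zeta>1 t0 min by auto
qed

lemma tendsto_diff_quotient_inverse_comp:
  fixes \<Theta> \<phi> G :: "real \<Rightarrow> real"
  assumes \<phi>_lim: "((\<lambda>s. \<phi> s / s) \<longlongrightarrow> b) (at_right 0)"
    and \<Theta>_lim: "((\<lambda>v. \<Theta> v / v) \<longlongrightarrow> a) (at_right 0)"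
    and "0 \<le> a" "0 < b"
    and G_lim: "filterlim G (at_right 0) (at_right 0)"
    and inverse: "\<forall>\<^sub>F s in at_right 0. \<Theta> (G s) = \<phi> s"
  shows "((\<lambda>s. ereal (G s / s)) \<longlongrightarrow> ereal b / ereal a) (at_right 0)"
proof -
  have \<Theta>G_lim: "((\<lambda>s. \<Theta> (G s) / G s) \<longlongrightarrow> a) (at_right 0)"
    using filterlim_compose[OF \<Theta>_lim G_lim] by simp
  have "\<forall>\<^sub>F s in at_right 0. 0 < s \<and> 0 < G s \<and> 0 < \<phi> s / s \<and> \<Theta> (G s) = \<phi> s"
    using eventually_at_right_less[of 0] G_lim[unfolded filterlim_at, THEN conjunct1]
      order_tendstoD(1)[OF \<phi>_lim \<open>0 < b\<close>] inverse
    by eventually_elim auto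
  then have quotient: "\<forall>\<^sub>F s in at_right 0. 0 < \<Theta> (G s) / G s
      \<and> G s / s = (\<phi> s / s) / (\<Theta> (G s) / G s)"
    by eventually_elim (auto simp: field_simps)
  show ?thesis
  proof (cases "a = 0")
    case True
    have "LIM s at_right 0. (\<phi> s / s) * inverse (\<Theta> (G s) / G s) :> at_top"
      using quotient \<Theta>G_lim True
      by (intro filterlim_tendsto_pos_mult_at_top[OF \<phi>_lim \<open>0 < b\<close>] filterlim_inverse_at_top)
        (auto elim: eventually_mono)
    then have "LIM s at_right 0. G s / s :> at_top"
      by (rule filterlim_cong[THEN iffD1, rotated -1])
        (use quotient in \<open>auto elim!: eventually_mono simp: divide_inverse\<close>)
    then show ?thesis using True \<open>0 < b\<close> by (simp add: tendsto_PInfty_eq_at_top)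
  next
    case False
    have "((\<lambda>s. (\<phi> s / s) / (\<Theta> (G s) / G s)) \<longlongrightarrow> b / a) (at_right 0)"
      using False by (intro tendsto_divide \<phi>_lim \<Theta>G_lim)
    then have "((\<lambda>s. G s / s) \<longlongrightarrow> b / a) (at_right 0)"
      by (rule Lim_transform_eventually) (use quotient in \<open>auto elim: eventually_mono\<close>)
    then show ?thesis using False by simp
  qed
qed

lemma ereal_divide_gt_1:
  fixes a b :: real
  assumes "0 \<le> a" "a < b"
  shows "1 < ereal b / ereal a"
  using assms by (cases "a = 0") (auto simp: one_ereal_def)

lemma inverse_comp_self_map:
  fixes \<Theta> \<phi> :: "real \<Rightarrow> real"
  assumes "0 < z"
    and \<Theta>_mono: "strict_mono_on {0..z} \<Theta>" and \<Theta>0: "\<Theta> 0 = 0"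
    and \<Theta>_nonexpansive: "\<And>x y. 0 \<le> x \<Longrightarrow> x \<le> y \<Longrightarrow> y \<le> z \<Longrightarrow> \<Theta> y - \<Theta> x \<le> y - x"
    and \<Theta>_lim: "((\<lambda>v. \<Theta> v / v) \<longlongrightarrow> a) (at_right 0)"
    and \<phi>_cont: "continuous_on {0..} \<phi>" and \<phi>0: "\<phi> 0 = 0"
    and \<phi>_pos: "\<And>s. 0 < s \<Longrightarrow> 0 < \<phi> s" and \<phi>_less: "\<And>s. 0 \<le> s \<Longrightarrow> \<phi> s < \<Theta> z"
    and \<phi>_lim: "((\<lambda>s. \<phi> s / s) \<longlongrightarrow> b) (at_right 0)" and "a < b"
  defines "G \<equiv> \<lambda>s. the_inv_into {0..z} \<Theta> (\<phi> s)"
  shows "\<exists>\<zeta>1. 0 < \<zeta>1 \<and> \<zeta>1 < z \<and>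
    continuous_on {0..} G \<and> (\<forall>s>0. G s > 0) \<and>
    (\<exists>L::ereal. ((\<lambda>s. ereal ((G s - G 0) / s)) \<longlongrightarrow> L) (at_right 0) \<and> L > 1) \<and>
    G ` {\<zeta>1..z} \<subseteq> {\<zeta>1..z} \<and> G ` {0..} \<subseteq> {0..z} \<and>
    (\<forall>s\<in>{\<zeta>1..z}. G \<zeta>1 \<le> G s) \<and> (\<forall>s\<in>{0<..\<zeta>1}. G s > s)"
proof -
  have \<Theta>_cont: "continuous_on {0..z} \<Theta>"
    using strict_mono_on_leD[OF \<Theta>_mono] \<Theta>_nonexpansive
    by (intro continuous_on_if_nonexpansive_mono) auto
  have \<Theta>_inj: "inj_on \<Theta> {0..z}" using strict_mono_on_imp_inj_on[OF \<Theta>_mono] .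
  have \<Theta>_image: "\<Theta> ` {0..z} = {0..\<Theta> z}"
    using strict_mono_on_Icc_image[OF \<Theta>_mono \<Theta>_cont] \<open>0 < z\<close> \<Theta>0 by simp
  have \<phi>_range: "\<phi> s \<in> {0..<\<Theta> z}" if "0 \<le> s" for s
    using \<phi>_pos[of s] \<phi>0 \<phi>_less[OF that] that by (cases "s = 0") auto
  have G_range: "G s \<in> {0..z}" and \<Theta>_G: "\<Theta> (G s) = \<phi> s" if "0 \<le> s" for s
  proof -
    have "\<phi> s \<in> \<Theta> ` {0..z}" using \<phi>_range[OF that] \<Theta>_image by auto
    then show "G s \<in> {0..z}" "\<Theta> (G s) = \<phi> s"
      unfolding G_def using the_inv_into_into[OF \<Theta>_inj, of "\<phi> s" "{0..z}"]
      by (auto intro: f_the_inv_into_f[OF \<Theta>_inj])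
  qed
  have G_less: "G s < z" if "0 \<le> s" for s
    using G_range[OF that] \<Theta>_G[OF that] \<phi>_range[OF that] by (cases "G s = z") auto
  have G0: "G 0 = 0"
    using \<phi>0 \<Theta>0 the_inv_into_f_f[OF \<Theta>_inj, of 0] \<open>0 < z\<close> unfolding G_def by simp
  have G_pos: "0 < G s" if "0 < s" for s
    using G_range[of s] \<Theta>_G[of s] \<phi>_pos[OF that] \<Theta>0 that by (cases "G s = 0") auto
  have G_cont: "continuous_on {0..} G"
    unfolding G_def
    using continuous_on_the_inv_into_Icc[OF \<Theta>_mono \<Theta>_cont] \<phi>_range \<open>0 < z\<close> \<Theta>0
    by (intro continuous_on_compose2[OF _ \<phi>_cont, of "{0..\<Theta> z}"]) fastforce+
  have "0 \<le> a"
  proof (rule tendsto_lowerbound[OF \<Theta>_lim])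
    have "\<forall>\<^sub>F v in at_right 0. v < z" using \<open>0 < z\<close> eventually_at_right_field by blast
    then show "\<forall>\<^sub>F v in at_right 0. 0 \<le> \<Theta> v / v"
      using eventually_at_right_less[of 0]
    proof eventually_elim
      case (elim v)
      then show ?case using strict_mono_onD[OF \<Theta>_mono, of 0 v] \<Theta>0 by auto
    qed
  qed simp
  have G_lim: "filterlim G (at_right 0) (at_right 0)"
    unfolding filterlim_at
  proof
    show "\<forall>\<^sub>F s in at_right 0. G s \<in> {0<..} \<and> G s \<noteq> 0"
      using eventually_at_right_less[of 0] by eventually_elim (use G_pos in force)
    have "(G \<longlongrightarrow> G 0) (at 0 within {0..})"
      using G_cont unfolding continuous_on_def by auto
    then show "(G \<longlongrightarrow> 0) (at_right 0)"
      using G0 by (auto elim: tendsto_within_subset)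
  qed
  define L where "L = ereal b / ereal a"
  have "\<forall>\<^sub>F s in at_right 0. \<Theta> (G s) = \<phi> s"
    using eventually_at_right_less[of 0] by eventually_elim (simp add: \<Theta>_G)
  then have "((\<lambda>s. ereal (G s / s)) \<longlongrightarrow> L) (at_right 0)"
    unfolding L_def using \<open>0 \<le> a\<close> \<open>a < b\<close>
    by (intro tendsto_diff_quotient_inverse_comp[OF \<phi>_lim \<Theta>_lim _ _ G_lim]) simp_all
  then have L: "((\<lambda>s. ereal ((G s - G 0) / s)) \<longlongrightarrow> L) (at_right 0)"
    by (simp only: G0 diff_zero)
  have "1 < L" unfolding L_def using \<open>0 \<le> a\<close> \<open>a < b\<close> by (rule ereal_divide_gt_1)
  have "\<forall>\<^sub>F s in at_right 0. s < G s"
    using order_tendstoD(1)[OF L \<open>1 < L\<close>] eventually_at_right_less[of 0]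
  proof eventually_elim
    case (elim s)
    then show ?case by (simp add: G0 less_divide_eq)
  qed
  then obtain \<zeta>1 where \<zeta>1: "0 < \<zeta>1" "\<zeta>1 < z" "G ` {\<zeta>1..z} \<subseteq> {\<zeta>1..z}"
      "\<forall>s\<in>{\<zeta>1..z}. G \<zeta>1 \<le> G s" "\<forall>s\<in>{0<..\<zeta>1}. s < G s"
    using exists_self_map_interval[OF G_cont G0 G_pos G_less] by blast
  show ?thesis
    by (intro exI[of _ \<zeta>1] conjI allI impI exI[of _ L])
      (use \<zeta>1 G_cont G_pos L \<open>1 < L\<close> G_range in auto)
qed

lemma borel_measurable_integral_lborel_section:
  fixes K :: "real \<Rightarrow> 'a \<Rightarrow> real"
  assumes "(\<lambda>(s, \<tau>). K s \<tau>) \<in> borel_measurable (lborel \<Otimes>\<^sub>M M)"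
  shows "(\<lambda>\<tau>. \<integral>s. K s \<tau> \<partial>lborel) \<in> borel_measurable M"
proof -
  have "(\<lambda>(\<tau>, s). K s \<tau>) \<in> borel_measurable (M \<Otimes>\<^sub>M lborel)"
    using measurable_compose[OF measurable_pair_swap' assms] by (simp add: case_prod_beta)
  then show ?thesis using lborel.borel_measurable_lebesgue_integral[of "\<lambda>\<tau> s. K s \<tau>" M] by simp
qed

lemma borel_measurable_section_restrict_space:
  fixes g :: "real \<Rightarrow> 'a \<Rightarrow> real"
  assumes "(\<lambda>(u, \<tau>). g u \<tau>) \<in> borel_measurable (restrict_space lborel S \<Otimes>\<^sub>M M)" "u \<in> S"
  shows "g u \<in> borel_measurable M"
proof -
  have "(\<lambda>\<tau>. (u, \<tau>)) \<in> measurable M (restrict_space lborel S \<Otimes>\<^sub>M M)"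
    using assms(2) by (intro measurable_Pair) (auto simp: space_restrict_space)
  from measurable_compose[OF this assms(1)] show ?thesis by simp
qed

lemma integral_eq_atom_plus_set_integral:
  fixes f :: "'a \<Rightarrow> real"
  assumes "finite_measure M" "integrable M f" "{x} \<in> sets M"
  shows "(\<integral>\<tau>. f \<tau> \<partial>M) = measure M {x} * f x + (LINT \<tau>:space M - {x}|M. f \<tau>)"
proof -
  have x: "x \<in> space M" using sets.sets_into_space[OF assms(3)] by simp
  have "(\<integral>\<tau>. f \<tau> \<partial>M) = (LINT \<tau>:{x} \<union> (space M - {x})|M. f \<tau>)"
    using set_integral_space[OF assms(2)] x by (simp add: insert_absorb)
  also have "\<dots> = (LINT \<tau>:{x}|M. f \<tau>) + (LINT \<tau>:space M - {x}|M. f \<tau>)"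
    using assms(3) integrable_mult_indicator[OF _ assms(2)]
    by (intro set_integral_Un) (auto simp: set_integrable_def)
  also have "(LINT \<tau>:{x}|M. f \<tau>) = (LINT \<tau>:{x}|M. f x)"
    using assms(3) by (intro set_lebesgue_integral_cong) auto
  also have "\<dots> = measure M {x} * f x"
    using assms(1,3) by (simp add: set_integral_const finite_measure.emeasure_finite)
  finally show ?thesis .
qed

lemma tendsto_quotient_at_right_if_has_real_derivative:
  assumes "(f has_real_derivative D) (at 0 within {0..})" "f 0 = 0"
  shows "((\<lambda>u. f u / u) \<longlongrightarrow> D) (at_right 0)"
proof -
  have "((\<lambda>u. (f u - f 0) / (u - 0)) \<longlongrightarrow> D) (at 0 within {0..})"
    using assms(1) unfolding has_field_derivative_iff .
  then show ?thesis using assms(2) by (auto elim: tendsto_within_subset)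
qed

lemma tendsto_integral_diff_quotient_at_right:
  fixes f :: "real \<Rightarrow> 'a \<Rightarrow> real"
  assumes meas: "\<And>u. 0 < u \<Longrightarrow> f u \<in> borel_measurable M"
    and w: "integrable M w"
    and bound: "\<And>u \<tau>. \<tau> \<in> space M \<Longrightarrow> 0 < u \<Longrightarrow> u \<le> 1 \<Longrightarrow> \<bar>f u \<tau>\<bar> \<le> w \<tau> * u"
    and lim: "\<And>\<tau>. \<tau> \<in> space M \<Longrightarrow> ((\<lambda>u. f u \<tau> / u) \<longlongrightarrow> d \<tau>) (at_right 0)"
  shows "((\<lambda>u. (\<integral>\<tau>. f u \<tau> \<partial>M) / u) \<longlongrightarrow> (\<integral>\<tau>. d \<tau> \<partial>M)) (at_right 0)"
proof -
  \<comment> \<open>Substituting \<open>u = 1/t\<close> puts the limit into the form of dominated convergence at infinity.\<close>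
  define h where "h t \<tau> = (if 0 < t then f (inverse t) \<tau> * t else 0)" for t \<tau>
  have lim_top: "((\<lambda>t. h t \<tau>) \<longlongrightarrow> d \<tau>) at_top" if "\<tau> \<in> space M" for \<tau>
  proof (rule Lim_transform_eventually)
    show "((\<lambda>t. f (inverse t) \<tau> * t) \<longlongrightarrow> d \<tau>) at_top"
      using lim[OF that] unfolding filterlim_at_right_to_top by (simp add: divide_inverse)
    show "\<forall>\<^sub>F t in at_top. f (inverse t) \<tau> * t = h t \<tau>"
      using eventually_gt_at_top[of 0] by eventually_elim (simp add: h_def divide_inverse)
  qed
  have h_meas: "h t \<in> borel_measurable M" for t
    using meas[of "inverse t"] unfolding h_def by (cases "0 < t") simp_all
  have "d \<in> borel_measurable M"
  proof (rule borel_measurable_LIMSEQ_real)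
    show "(\<lambda>i. h (real (Suc i)) \<tau>) \<longlonglongrightarrow> d \<tau>" if "\<tau> \<in> space M" for \<tau>
      using filterlim_compose[OF lim_top[OF that] filterlim_real_sequentially] LIMSEQ_Suc by blast
  qed (rule h_meas)
  then have "((\<lambda>t. \<integral>\<tau>. h t \<tau> \<partial>M) \<longlongrightarrow> (\<integral>\<tau>. d \<tau> \<partial>M)) at_top"
  proof (rule integral_dominated_convergence_at_top[OF _ h_meas w])
    show "AE \<tau> in M. ((\<lambda>t. h t \<tau>) \<longlongrightarrow> d \<tau>) at_top" using lim_top by blast
    show "\<forall>\<^sub>F t in at_top. AE \<tau> in M. norm (h t \<tau>) \<le> w \<tau>"
      using eventually_ge_at_top[of 1]
    proof eventually_elim
      case (elim t)
      have "\<bar>f (inverse t) \<tau>\<bar> * t \<le> w \<tau>" if "\<tau> \<in> space M" for \<tau>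
        using bound[OF that, of "inverse t"] elim
        by (auto simp: inverse_le_1_iff field_simps)
      then show ?case using elim by (intro AE_I2) (auto simp: h_def abs_mult)
    qed
  qed
  moreover have "\<forall>\<^sub>F t in at_top. (\<integral>\<tau>. h t \<tau> \<partial>M) = (\<integral>\<tau>. f (inverse t) \<tau> \<partial>M) / inverse t"
    using eventually_gt_at_top[of 0] by eventually_elim (simp add: h_def divide_inverse)
  ultimately show ?thesis
    unfolding filterlim_at_right_to_top by (rule Lim_transform_eventually)
qed

lemma chi_zero_eq_atom_plus_set_integral:
  assumes "finite_measure M" "{\<tau>0} \<in> sets M" "emeasure M {\<tau>0} = 1" "chi M K g' 0 \<noteq> 1"
  shows "chi M K g' 0 = 1 - ((\<integral>s. K s \<tau>0 \<partial>lborel) * g' \<tau>0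
    + (LINT \<tau>:space M - {\<tau>0}|M. g' \<tau> * (\<integral>s. K s \<tau> \<partial>lborel)))"
proof -
  have chi_eq: "chi M K g' 0 = 1 - (\<integral>\<tau>. g' \<tau> * (\<integral>s. K s \<tau> \<partial>lborel) \<partial>M)"
    unfolding chi_def by (simp add: mult.commute)
  \<comment> \<open>A non-integrable integrand would have integral \<open>0\<close>, giving \<open>chi M K g' 0 = 1\<close>.\<close>
  then have "integrable M (\<lambda>\<tau>. g' \<tau> * (\<integral>s. K s \<tau> \<partial>lborel))"
    using assms(4) not_integrable_integral_eq by force
  then show ?thesis
    using chi_eq integral_eq_atom_plus_set_integral[OF assms(1) _ assms(2)] assms(3)
    by (simp add: measure_def mult.commute)
qed

lemma gtilde_zero:
  assumes "\<And>\<tau>. \<tau> \<in> space M \<Longrightarrow> g 0 \<tau> = 0"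
  shows "gtilde M K g \<tau>0 0 = 0"
  using assms unfolding gtilde_def set_lebesgue_integral_def
  by (simp add: indicator_def cong: Bochner_Integration.integral_cong)

context
  fixes M :: "'a measure" and K g :: "real \<Rightarrow> 'a \<Rightarrow> real"
  assumes K_meas: "(\<lambda>(s, \<tau>). K s \<tau>) \<in> borel_measurable (lborel \<Otimes>\<^sub>M M)"
    and K_pos: "\<And>\<tau>. \<tau> \<in> space M \<Longrightarrow> (\<integral>s. K s \<tau> \<partial>lborel) > 0"
    and g_meas: "(\<lambda>(u, \<tau>). g u \<tau>) \<in> borel_measurable (restrict_space lborel {0..} \<Otimes>\<^sub>M M)"
    and g_nonneg: "\<And>u \<tau>. u \<ge> 0 \<Longrightarrow> \<tau> \<in> space M \<Longrightarrow> g u \<tau> \<ge> 0"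
    and condC: "\<And>\<delta>. \<delta> > 0 \<Longrightarrow> \<exists>C\<delta> \<in> borel_measurable M. (\<forall>\<tau>\<in>space M. C\<delta> \<tau> \<ge> 0)
        \<and> (\<forall>\<tau>\<in>space M. \<forall>u\<in>{0..\<delta>}. g u \<tau> \<le> C\<delta> \<tau> * u)
        \<and> (\<integral>\<^sup>+\<tau>. ennreal (C\<delta> \<tau> * (\<integral>s. K s \<tau> \<partial>lborel)) \<partial>M) < \<infinity>"
begin

lemma integrable_linear_bound:
  assumes "0 < \<delta>"
  obtains C where "integrable M (\<lambda>\<tau>. C \<tau> * (\<integral>s. K s \<tau> \<partial>lborel))"
    "\<And>\<tau> u. \<tau> \<in> space M \<Longrightarrow> 0 \<le> u \<Longrightarrow> u \<le> \<delta> \<Longrightarrow>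
      \<bar>g u \<tau> * (\<integral>s. K s \<tau> \<partial>lborel)\<bar> \<le> C \<tau> * (\<integral>s. K s \<tau> \<partial>lborel) * u"
proof -
  obtain C where C: "C \<in> borel_measurable M" "\<forall>\<tau>\<in>space M. C \<tau> \<ge> 0"
      "\<forall>\<tau>\<in>space M. \<forall>u\<in>{0..\<delta>}. g u \<tau> \<le> C \<tau> * u"
      "(\<integral>\<^sup>+\<tau>. ennreal (C \<tau> * (\<integral>s. K s \<tau> \<partial>lborel)) \<partial>M) < \<infinity>"
    using condC[OF assms] by blast
  show ?thesis
  proof
    have "AE \<tau> in M. 0 \<le> C \<tau> * (\<integral>s. K s \<tau> \<partial>lborel)"
      using C(2) K_pos by (intro AE_I2) (simp add: less_imp_le)
    then show "integrable M (\<lambda>\<tau>. C \<tau> * (\<integral>s. K s \<tau> \<partial>lborel))"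
      using C(1,4) borel_measurable_integral_lborel_section[OF K_meas]
      by (intro integrableI_nonneg) auto
    fix \<tau> u assume "\<tau> \<in> space M" "0 \<le> u" "u \<le> \<delta>"
    then show "\<bar>g u \<tau> * (\<integral>s. K s \<tau> \<partial>lborel)\<bar> \<le> C \<tau> * (\<integral>s. K s \<tau> \<partial>lborel) * u"
      using C(3) g_nonneg K_pos[of \<tau>]
      by (auto simp: abs_mult mult.commute mult.left_commute intro!: mult_left_mono)
  qed
qed

lemma integrable_gtilde_integrand:
  assumes "0 \<le> u"
  shows "integrable M (\<lambda>\<tau>. g u \<tau> * (\<integral>s. K s \<tau> \<partial>lborel))"
proof -
  obtain C where C: "integrable M (\<lambda>\<tau>. C \<tau> * (\<integral>s. K s \<tau> \<partial>lborel))"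
    "\<And>\<tau> v. \<tau> \<in> space M \<Longrightarrow> 0 \<le> v \<Longrightarrow> v \<le> u + 1 \<Longrightarrow>
      \<bar>g v \<tau> * (\<integral>s. K s \<tau> \<partial>lborel)\<bar> \<le> C \<tau> * (\<integral>s. K s \<tau> \<partial>lborel) * v"
    using integrable_linear_bound[of "u + 1"] assms by auto
  show ?thesis
  proof (rule Bochner_Integration.integrable_bound)
    show "integrable M (\<lambda>\<tau>. C \<tau> * (\<integral>s. K s \<tau> \<partial>lborel) * u)" using C(1) by simp
    show "(\<lambda>\<tau>. g u \<tau> * (\<integral>s. K s \<tau> \<partial>lborel)) \<in> borel_measurable M"
      using borel_measurable_section_restrict_space[OF g_meas] assms
        borel_measurable_integral_lborel_section[OF K_meas] by simp
    show "AE \<tau> in M. norm (g u \<tau> * (\<integral>s. K s \<tau> \<partial>lborel))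
        \<le> norm (C \<tau> * (\<integral>s. K s \<tau> \<partial>lborel) * u)"
      using C(2) assms by (intro AE_I2) force
  qed
qed

lemma gtilde_mono:
  assumes "\<And>\<tau>. \<tau> \<in> space M \<Longrightarrow> \<tau> \<noteq> \<tau>0 \<Longrightarrow> mono_on {0..} (\<lambda>v. g v \<tau>)"
    and "{\<tau>0} \<in> sets M" "0 \<le> x" "x \<le> y"
  shows "gtilde M K g \<tau>0 x \<le> gtilde M K g \<tau>0 y"
  unfolding gtilde_def
proof (rule set_integral_mono)
  have "set_integrable M (space M - {\<tau>0}) (\<lambda>\<tau>. g v \<tau> * (\<integral>s. K s \<tau> \<partial>lborel))" if "0 \<le> v" for v
    using integrable_mult_indicator[OF _ integrable_gtilde_integrand[OF that]] assms(2)
    unfolding set_integrable_def by blast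
  then show "set_integrable M (space M - {\<tau>0}) (\<lambda>\<tau>. g x \<tau> * (\<integral>s. K s \<tau> \<partial>lborel))"
    "set_integrable M (space M - {\<tau>0}) (\<lambda>\<tau>. g y \<tau> * (\<integral>s. K s \<tau> \<partial>lborel))"
    using assms(3,4) by auto
  fix \<tau> assume "\<tau> \<in> space M - {\<tau>0}"
  then show "g x \<tau> * (\<integral>s. K s \<tau> \<partial>lborel) \<le> g y \<tau> * (\<integral>s. K s \<tau> \<partial>lborel)"
    using mono_onD[OF assms(1)] K_pos[of \<tau>] assms(3,4) by (auto intro!: mult_right_mono)
qed

lemma tendsto_gtilde_diff_quotient:
  assumes "{\<tau>0} \<in> sets M" and g_zero: "\<And>\<tau>. \<tau> \<in> space M \<Longrightarrow> g 0 \<tau> = 0"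
    and g_deriv: "\<And>\<tau>. \<tau> \<in> space M \<Longrightarrow> ((\<lambda>u. g u \<tau>) has_real_derivative g' \<tau>) (at 0 within {0..})"
  shows "((\<lambda>v. gtilde M K g \<tau>0 v / v)
    \<longlongrightarrow> (LINT \<tau>:space M - {\<tau>0}|M. g' \<tau> * (\<integral>s. K s \<tau> \<partial>lborel))) (at_right 0)"
proof -
  define k where "k \<tau> = (\<integral>s. K s \<tau> \<partial>lborel)" for \<tau>
  define X' where "X' = space M - {\<tau>0}"
  obtain C where C: "integrable M (\<lambda>\<tau>. C \<tau> * k \<tau>)"
    "\<And>\<tau> u. \<tau> \<in> space M \<Longrightarrow> 0 \<le> u \<Longrightarrow> u \<le> 1 \<Longrightarrow> \<bar>g u \<tau> * k \<tau>\<bar> \<le> C \<tau> * k \<tau> * u"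
    using integrable_linear_bound[of 1] unfolding k_def by auto
  have "((\<lambda>u. (\<integral>\<tau>. indicator X' \<tau> * (g u \<tau> * k \<tau>) \<partial>M) / u)
      \<longlongrightarrow> (\<integral>\<tau>. indicator X' \<tau> * (g' \<tau> * k \<tau>) \<partial>M)) (at_right 0)"
  proof (rule tendsto_integral_diff_quotient_at_right[OF _ C(1)])
    show "(\<lambda>\<tau>. indicator X' \<tau> * (g u \<tau> * k \<tau>)) \<in> borel_measurable M" if "0 < u" for u
      using borel_measurable_section_restrict_space[OF g_meas, of u]
        borel_measurable_integral_lborel_section[OF K_meas] assms(1) that
      unfolding k_def X'_def by simp
    show "\<bar>indicator X' \<tau> * (g u \<tau> * k \<tau>)\<bar> \<le> C \<tau> * k \<tau> * u"
      if "\<tau> \<in> space M" "0 < u" "u \<le> 1" for \<tau> u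
    proof -
      have "\<bar>g u \<tau> * k \<tau>\<bar> \<le> C \<tau> * k \<tau> * u" using C(2)[OF that(1) _ that(3)] that(2) by simp
      then show ?thesis by (auto simp: indicator_def intro: order.trans[OF abs_ge_zero])
    qed
    show "((\<lambda>u. indicator X' \<tau> * (g u \<tau> * k \<tau>) / u) \<longlongrightarrow> indicator X' \<tau> * (g' \<tau> * k \<tau>)) (at_right 0)"
      if "\<tau> \<in> space M" for \<tau>
    proof -
      from tendsto_quotient_at_right_if_has_real_derivative[OF g_deriv[OF that] g_zero[OF that]]
      have "((\<lambda>u. indicator X' \<tau> * k \<tau> * (g u \<tau> / u)) \<longlongrightarrow> indicator X' \<tau> * k \<tau> * g' \<tau>) (at_right 0)"
        by (rule tendsto_mult_left)
      then show ?thesis by (simp add: mult_ac)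
    qed
  qed
  then show ?thesis
    unfolding gtilde_def set_lebesgue_integral_def k_def X'_def by (simp add: mult_ac)
qed

end

theorem lemma1p6:
  fixes M :: "'a measure" and K :: "real \<Rightarrow> 'a \<Rightarrow> real" and g :: "real \<Rightarrow> 'a \<Rightarrow> real"
    and g' :: "'a \<Rightarrow> real" and \<tau>0 :: 'a and \<zeta>2 :: real
  assumes finM: "finite_measure M"
    and K_meas: "(\<lambda>(s, \<tau>). K s \<tau>) \<in> borel_measurable (lborel \<Otimes>\<^sub>M M)"
    and K_nonneg: "\<And>s \<tau>. \<tau> \<in> space M \<Longrightarrow> K s \<tau> \<ge> 0"
    and K_int: "integrable (lborel \<Otimes>\<^sub>M M) (\<lambda>(s, \<tau>). K s \<tau>)"
    and K_pos: "\<And>\<tau>. \<tau> \<in> space M \<Longrightarrow> (\<integral>s. K s \<tau> \<partial>lborel) > 0"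
    and g_meas: "(\<lambda>(u, \<tau>). g u \<tau>) \<in> borel_measurable (restrict_space lborel {0..} \<Otimes>\<^sub>M M)"
    and g_nonneg: "\<And>u \<tau>. u \<ge> 0 \<Longrightarrow> \<tau> \<in> space M \<Longrightarrow> g u \<tau> \<ge> 0"
    and g_zero: "\<And>\<tau>. \<tau> \<in> space M \<Longrightarrow> g 0 \<tau> = 0"
    and g_cont: "\<And>\<tau>. \<tau> \<in> space M \<Longrightarrow> continuous_on {0..} (\<lambda>u. g u \<tau>)"
    and g_deriv: "\<And>\<tau>. \<tau> \<in> space M \<Longrightarrow> ((\<lambda>u. g u \<tau>) has_real_derivative g' \<tau>) (at 0 within {0..})"
    and g'_pos: "\<And>\<tau>. \<tau> \<in> space M \<Longrightarrow> g' \<tau> > 0"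
    and chi0: "chi M K g' 0 < 0"
    and condC: "\<And>\<delta>. \<delta> > 0 \<Longrightarrow> \<exists>C\<delta> \<in> borel_measurable M. (\<forall>\<tau>\<in>space M. C\<delta> \<tau> \<ge> 0)
        \<and> (\<forall>\<tau>\<in>space M. \<forall>u\<in>{0..\<delta>}. g u \<tau> \<le> C\<delta> \<tau> * u)
        \<and> (\<integral>\<^sup>+\<tau>. ennreal (C\<delta> \<tau> * (\<integral>s. K s \<tau> \<partial>lborel)) \<partial>M) < \<infinity>"
    and N1_pt: "\<tau>0 \<in> space M" "{\<tau>0} \<in> sets M" "emeasure M {\<tau>0} = 1"
    and N1_mono: "\<And>\<tau>. \<tau> \<in> space M \<Longrightarrow> \<tau> \<noteq> \<tau>0 \<Longrightarrow> mono_on {0..} (\<lambda>v. g v \<tau>)"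
    and N1_pos: "\<And>v. v > 0 \<Longrightarrow> g v \<tau>0 > 0"
    and N2_pos: "\<zeta>2 > 0"
    and N2_mono: "strict_mono_on {0..\<zeta>2} (Theta M K g \<tau>0)"
    and N2_max: "\<exists>vm\<ge>0. (\<forall>v\<ge>0. g v \<tau>0 \<le> g vm \<tau>0)
        \<and> Theta M K g \<tau>0 \<zeta>2 > (\<integral>s. K s \<tau>0 \<partial>lborel) * g vm \<tau>0"
  shows "\<exists>\<zeta>1. 0 < \<zeta>1 \<and> \<zeta>1 < \<zeta>2 \<and>
    continuous_on {0..} (Gfun M K g \<tau>0 \<zeta>2) \<and>
    (\<forall>s>0. Gfun M K g \<tau>0 \<zeta>2 s > 0) \<and>
    (\<exists>L::ereal. ((\<lambda>s. ereal ((Gfun M K g \<tau>0 \<zeta>2 s - Gfun M K g \<tau>0 \<zeta>2 0) / s)) \<longlongrightarrow> L) (at_right 0) \<and> L > 1) \<and>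
    Gfun M K g \<tau>0 \<zeta>2 ` {\<zeta>1..\<zeta>2} \<subseteq> {\<zeta>1..\<zeta>2} \<and>
    Gfun M K g \<tau>0 \<zeta>2 ` {0..} \<subseteq> {0..\<zeta>2} \<and>
    (\<forall>s\<in>{\<zeta>1..\<zeta>2}. Gfun M K g \<tau>0 \<zeta>2 \<zeta>1 \<le> Gfun M K g \<tau>0 \<zeta>2 s) \<and>
    (\<forall>s\<in>{0<..\<zeta>1}. Gfun M K g \<tau>0 \<zeta>2 s > s)"
proof -
  define k where "k \<tau> = (\<integral>s. K s \<tau> \<partial>lborel)" for \<tau>
  define I where "I = (LINT \<tau>:space M - {\<tau>0}|M. g' \<tau> * k \<tau>)"
  have \<Theta>0: "Theta M K g \<tau>0 0 = 0"
    using gtilde_zero[of M g] g_zero unfolding Theta_def by simp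
  have \<Theta>_nonexpansive: "Theta M K g \<tau>0 y - Theta M K g \<tau>0 x \<le> y - x" if "0 \<le> x" "x \<le> y" "y \<le> \<zeta>2" for x y
    using gtilde_mono[OF K_meas K_pos g_meas g_nonneg condC N1_mono N1_pt(2) that(1,2)]
    unfolding Theta_def by simp
  have \<Theta>_lim: "((\<lambda>v. Theta M K g \<tau>0 v / v) \<longlongrightarrow> 1 - I) (at_right 0)"
  proof (rule Lim_transform_eventually)
    show "((\<lambda>v. 1 - gtilde M K g \<tau>0 v / v) \<longlongrightarrow> 1 - I) (at_right 0)"
      using tendsto_gtilde_diff_quotient[OF K_meas K_pos g_meas g_nonneg condC N1_pt(2) g_zero g_deriv]
      unfolding I_def k_def by (intro tendsto_diff tendsto_const)
    show "\<forall>\<^sub>F v in at_right 0. 1 - gtilde M K g \<tau>0 v / v = Theta M K g \<tau>0 v / v"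
      using eventually_at_right_less[of 0] by eventually_elim (simp add: Theta_def diff_divide_distrib)
  qed
  have "1 - I < k \<tau>0 * g' \<tau>0"
    using chi0 chi_zero_eq_atom_plus_set_integral[OF finM N1_pt(2,3), of K g']
    unfolding I_def k_def by simp
  obtain vm where "\<forall>v\<ge>0. g v \<tau>0 \<le> g vm \<tau>0" "k \<tau>0 * g vm \<tau>0 < Theta M K g \<tau>0 \<zeta>2"
    using N2_max unfolding k_def by blast
  moreover have "0 < k \<tau>0" using K_pos[OF N1_pt(1)] unfolding k_def .
  ultimately have \<phi>_less: "k \<tau>0 * g s \<tau>0 < Theta M K g \<tau>0 \<zeta>2" if "0 \<le> s" for s
    using that by (smt (verit) mult_left_mono)
  have "continuous_on {0..} (\<lambda>s. k \<tau>0 * g s \<tau>0)"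
    using g_cont[OF N1_pt(1)] by (intro continuous_intros)
  moreover have "((\<lambda>s. k \<tau>0 * g s \<tau>0 / s) \<longlongrightarrow> k \<tau>0 * g' \<tau>0) (at_right 0)"
    using tendsto_mult_left[OF tendsto_quotient_at_right_if_has_real_derivative[OF g_deriv g_zero]]
      N1_pt(1) by simp
  moreover have "Gfun M K g \<tau>0 \<zeta>2 = (\<lambda>s. the_inv_into {0..\<zeta>2} (Theta M K g \<tau>0) (k \<tau>0 * g s \<tau>0))"
    unfolding Gfun_def k_def ..
  ultimately show ?thesis
    using inverse_comp_self_map[OF N2_pos N2_mono \<Theta>0 \<Theta>_nonexpansive \<Theta>_lim _ _ _ \<phi>_less]
      \<open>0 < k \<tau>0\<close> g_zero[OF N1_pt(1)] N1_pos \<open>1 - I < k \<tau>0 * g' \<tau>0\<close> by simp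
qed

end
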